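(* Let $m,k\in\mathbb{N}$ and let $\alpha\in\mathbb{C}$ with $\alpha,1-\alpha\notin\mathbb{Z}_0^-$. Then \[ {}_3F_2\left[\begin{array}{r} -m,\ \alpha,\ 1-\alpha;\\ -2m-k,\ 1+k;\end{array}1\right]_m=\frac{\left(\frac{2-\alpha+k}{2}\right)_{m} \left(\frac{1+\alpha+k}{2}\right)_{m}}{\left(\frac{2+k}{2}\right)_{m} \left(\frac{1+k}{2}\right)_{m}}. \]
   Context: $\mathbb{N}=\{1,2,3,\dots\}$, $\mathbb{Z}_0^-=\{0,-1,-2,\dots\}$. For $a\in\mathbb{C}$ and $n\in\mathbb{N}_0$, $(a)_0=1$ and $(a)_n=a(a+1)\cdots(a+n-1)$. For $N\in\mathbb{N}_0$, ${}_3F_2\left[\begin{array}{r} a_1,a_2,a_3;\\ b_1,b_2;\end{array}z\right]_N=\sum_{n=0}^{N}\frac{(a_1)_n(a_2)_n(a_3)_n}{(b_1)_n(b_2)_n}\frac{z^n}{n!}$ (the sum of the first $N+1$ terms), defined whenever $(b_1)_n(b_2)_n\neq0$ for $0\le n\le N$. *)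

theory Defs
  imports Complex_Main
begin

definition hyp3F2_trunc ::
  "complex \<Rightarrow> complex \<Rightarrow> complex \<Rightarrow> complex \<Rightarrow> complex \<Rightarrow> complex \<Rightarrow> nat \<Rightarrow> complex" where
  "hyp3F2_trunc a1 a2 a3 b1 b2 z N =
     (\<Sum>n=0..N. pochhammer a1 n * pochhammer a2 n * pochhammer a3 n
        / (pochhammer b1 n * pochhammer b2 n) * z ^ n / of_nat (fact n))"

end

theory Submission
  imports Defs
begin

(* Zeilberger's method. Write F m n for the n-th summand and S m for the sum.
   With N = 2m + k, the rational certificate R m n = (a + n)(1 - a + n) F m n satisfies
     (N+2)(N+1) F (m+1) (n+1) - (N+2-a)(N+1+a) F m (n+1) = R m n - R m (n+1),
   and the n = 0 term of the same difference is -R m 0. Summing over n telescopes to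
   -R m (m+1) = 0, so (N+2)(N+1) S (m+1) = (N+2-a)(N+1+a) S m. The right-hand side obeys
   the same first-order recurrence and both sides equal 1 at m = 0. *)

definition summand :: "nat \<Rightarrow> complex \<Rightarrow> nat \<Rightarrow> nat \<Rightarrow> complex" where
  "summand k a m n = pochhammer (- of_nat m) n * pochhammer a n * pochhammer (1 - a) n
     / (pochhammer (- of_nat (2*m + k)) n * pochhammer (1 + of_nat k) n * fact n)"

lemma pochhammer_minus_two_Suc:
  fixes z :: "'a :: comm_ring_1"
  shows "pochhammer (z - 2) (Suc n) * (z + of_nat n - 1) = (z - 2) * (z - 1) * pochhammer z n"
proof -
  have "pochhammer (z - 2) (Suc n) * (z + of_nat n - 1) = pochhammer (z - 2) (Suc (Suc n))"
    by (simp add: pochhammer_Suc algebra_simps)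
  also have "\<dots> = (z - 2) * (z - 1) * pochhammer z n"
    by (simp add: pochhammer_rec algebra_simps)
  finally show ?thesis .
qed

lemma mult_fraction_cancel:
  fixes c d x y P Q :: "'a :: field"
  assumes "y \<noteq> 0" "c * x = d * y"
  shows "c * (P * x / (Q * y)) = d * (P / Q)"
proof -
  have "c * (P * x / (Q * y)) = P / Q * (c * x) / y"
    by (simp add: field_simps)
  also have "\<dots> = d * (P / Q)"
    using assms by (simp add: field_simps)
  finally show ?thesis .
qed

lemma hyp3F2_trunc_eq_sum_summand:
  "hyp3F2_trunc (- of_nat m) a (1 - a) (- of_nat (2*m + k)) (1 + of_nat k) 1 m = (\<Sum>n\<le>m. summand k a m n)"
  unfolding hyp3F2_trunc_def summand_def atLeast0AtMost by (simp add: field_simps)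

lemma summand_0 [simp]: "summand k a m 0 = 1"
  by (simp add: summand_def)

lemma summand_Suc_self [simp]: "summand k a m (Suc m) = 0"
  by (simp add: summand_def pochhammer_of_nat_eq_0_iff)

text \<open>No hypotheses are needed: where a denominator vanishes both sides are 0, since x / 0 = 0.\<close>

lemma summand_Suc:
  "summand k a m (Suc j) = summand k a m j * ((of_nat j - of_nat m) * ((a + of_nat j) * (1 - a + of_nat j))
     / ((of_nat j - of_nat (2*m+k)) * ((1 + of_nat k + of_nat j) * (of_nat j + 1))))"
  unfolding summand_def pochhammer_Suc fact_Suc times_divide_times_eq
  by (simp add: algebra_simps)

lemma summand_Suc_Suc:
  assumes "j \<le> m"
  shows "summand k a (Suc m) (Suc j) = summand k a m j
    * ((of_nat m + 1) * (of_nat (2*m+k) + 1 - of_nat j) * ((a + of_nat j) * (1 - a + of_nat j))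
      / ((of_nat (2*m+k) + 2) * (of_nat (2*m+k) + 1) * ((1 + of_nat k + of_nat j) * (of_nat j + 1))))"
proof -
  define z :: complex where "z = - of_nat (2*m + k)"
  have "z + of_nat j - 1 \<noteq> 0"
    using assms by (simp add: z_def complex_eq_iff)
  then have shift_z: "pochhammer (z - 2) (Suc j) = (z - 2) * (z - 1) * pochhammer z j / (z + of_nat j - 1)"
    by (simp add: eq_divide_eq pochhammer_minus_two_Suc)
  have shift_m: "pochhammer (- of_nat (Suc m)) (Suc j) = (- of_nat m - 1) * pochhammer (- of_nat m :: complex) j"
    by (simp add: pochhammer_rec algebra_simps)
  have shift_N: "- of_nat (2 * Suc m + k) = z - 2"
    by (simp add: z_def)
  show ?thesis
    unfolding summand_def shift_N z_def[symmetric] shift_m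
    unfolding shift_z pochhammer_Suc[of a] pochhammer_Suc[of "1 - a"] pochhammer_Suc[of "1 + of_nat k"] fact_Suc
      times_divide_eq_left times_divide_eq_right divide_divide_eq_left divide_divide_eq_right
    by (intro arg_cong2[where f="(/)"]) (simp_all add: z_def algebra_simps of_nat_Suc)
qed

definition certificate :: "nat \<Rightarrow> complex \<Rightarrow> nat \<Rightarrow> nat \<Rightarrow> complex" where
  "certificate k a m n = (a + of_nat n) * (1 - a + of_nat n) * summand k a m n"

lemma summand_telescoping:
  assumes "j \<le> m" "k \<ge> 1"
  shows "(of_nat (2*m+k) + 2) * (of_nat (2*m+k) + 1) * summand k a (Suc m) (Suc j)
       - (of_nat (2*m+k) + 2 - a) * (of_nat (2*m+k) + 1 + a) * summand k a m (Suc j)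
     = certificate k a m j - certificate k a m (Suc j)"
proof -
  define N :: complex where "N = of_nat (2*m+k)"
  define E :: complex where "E = (1 + of_nat k + of_nat j) * (of_nat j + 1)"
  define P where "P = (a + of_nat j) * (1 - a + of_nat j)"
  define v where "v = P * summand k a m j / E"
  define s where "s = summand k a m (Suc j)"
  define c where "c = (N + 2) * (N + 1)"
  have "c \<noteq> 0" "E \<noteq> 0"
    by (simp_all add: c_def N_def E_def complex_eq_iff)
  have "N - of_nat j \<noteq> 0"
    using assms by (simp only: N_def right_minus_eq of_nat_eq_iff)
  have next_both: "c * summand k a (Suc m) (Suc j) = (of_nat m + 1) * (N + 1 - of_nat j) * v"
    using \<open>c \<noteq> 0\<close> \<open>E \<noteq> 0\<close>
    unfolding summand_Suc_Suc[OF assms(1)] N_def[symmetric] E_def[symmetric] P_def[symmetric] c_def[symmetric] v_def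
    by (simp add: field_simps)
  have next_m: "(N - of_nat j) * s = (of_nat m - of_nat j) * v"
    using \<open>N - of_nat j \<noteq> 0\<close> \<open>E \<noteq> 0\<close>
    unfolding s_def summand_Suc[of k a m j] N_def[symmetric] E_def[symmetric] P_def[symmetric] v_def
    by (simp add: field_simps)
  have "c * summand k a (Suc m) (Suc j) - (N + 2 - a) * (N + 1 + a) * s
      = (of_nat m + 1) * (N + 1 - of_nat j) * v
        - ((N - of_nat j) * (N + of_nat j + 3) + (a + of_nat j + 1) * (2 - a + of_nat j)) * s"
    unfolding next_both by (simp add: algebra_simps)
  also have "\<dots> = ((of_nat m + 1) * (N + 1 - of_nat j) - (N + of_nat j + 3) * (of_nat m - of_nat j)) * v
      - (a + of_nat j + 1) * (2 - a + of_nat j) * s"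
  proof -
    have "(N - of_nat j) * (N + of_nat j + 3) * s = (N + of_nat j + 3) * (of_nat m - of_nat j) * v"
      using next_m by (metis mult.assoc mult.commute)
    then show ?thesis
      by (simp add: algebra_simps)
  qed
  also have "(of_nat m + 1) * (N + 1 - of_nat j) - (N + of_nat j + 3) * (of_nat m - of_nat j) = E"
    by (simp add: N_def E_def algebra_simps)
  also have "E * v = certificate k a m j"
    using \<open>E \<noteq> 0\<close> by (simp add: certificate_def v_def P_def)
  also have "(a + of_nat j + 1) * (2 - a + of_nat j) * s = certificate k a m (Suc j)"
    by (simp add: certificate_def s_def algebra_simps)
  finally show ?thesis
    by (simp only: c_def N_def s_def)
qed

lemma sum_summand_recurrence:
  assumes "k \<ge> 1"
  shows "(of_nat (2*m+k) + 2) * (of_nat (2*m+k) + 1) * (\<Sum>n\<le>Suc m. summand k a (Suc m) n)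
     = (of_nat (2*m+k) + 2 - a) * (of_nat (2*m+k) + 1 + a) * (\<Sum>n\<le>m. summand k a m n)"
proof -
  define c where "c = (of_nat (2*m+k) + 2) * (of_nat (2*m+k) + 1 :: complex)"
  define d where "d = (of_nat (2*m+k) + 2 - a) * (of_nat (2*m+k) + 1 + a)"
  define D where "D n = c * summand k a (Suc m) n - d * summand k a m n" for n
  have "D 0 = - certificate k a m 0"
    by (simp add: D_def c_def d_def certificate_def algebra_simps)
  moreover have "(\<Sum>j<Suc m. D (Suc j)) = (\<Sum>j<Suc m. certificate k a m j - certificate k a m (Suc j))"
  proof (rule sum.cong)
    fix j assume "j \<in> {..<Suc m}"
    then show "D (Suc j) = certificate k a m j - certificate k a m (Suc j)"
      unfolding D_def c_def d_def using assms by (intro summand_telescoping) auto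
  qed simp
  ultimately have "(\<Sum>n\<le>Suc m. D n) = - certificate k a m (Suc m)"
    by (simp add: sum.atMost_shift sum_lessThan_telescope')
  also have "\<dots> = 0"
    by (simp add: certificate_def)
  finally have "c * (\<Sum>n\<le>Suc m. summand k a (Suc m) n) - d * (\<Sum>n\<le>Suc m. summand k a m n) = 0"
    by (simp only: D_def sum_subtractf sum_distrib_left)
  then show ?thesis
    by (simp add: c_def d_def)
qed

definition closed_form :: "nat \<Rightarrow> complex \<Rightarrow> nat \<Rightarrow> complex" where
  "closed_form k a m = pochhammer ((2 - a + of_nat k) / 2) m * pochhammer ((1 + a + of_nat k) / 2) m
    / (pochhammer ((2 + of_nat k) / 2) m * pochhammer ((1 + of_nat k) / 2) m)"

lemma closed_form_recurrence:
  "(of_nat (2*m+k) + 2) * (of_nat (2*m+k) + 1) * closed_form k a (Suc m)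
    = (of_nat (2*m+k) + 2 - a) * (of_nat (2*m+k) + 1 + a) * closed_form k a m"
proof -
  define x where "x = ((2 - a + of_nat k) / 2 + of_nat m) * ((1 + a + of_nat k) / 2 + of_nat m)"
  define y :: complex where "y = ((2 + of_nat k) / 2 + of_nat m) * ((1 + of_nat k) / 2 + of_nat m)"
  define P where "P = pochhammer ((2 - a + of_nat k) / 2) m * pochhammer ((1 + a + of_nat k) / 2) m"
  define Q :: complex where "Q = pochhammer ((2 + of_nat k) / 2) m * pochhammer ((1 + of_nat k) / 2) m"
  have "y \<noteq> 0"
    by (simp add: y_def complex_eq_iff) (simp add: field_simps)
  moreover have "(of_nat (2*m+k) + 2) * (of_nat (2*m+k) + 1) * x = (of_nat (2*m+k) + 2 - a) * (of_nat (2*m+k) + 1 + a) * y"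
    by (simp add: x_def y_def field_simps)
  moreover have "closed_form k a (Suc m) = P * x / (Q * y)"
    by (simp add: closed_form_def pochhammer_Suc P_def Q_def x_def y_def ac_simps)
  moreover have "closed_form k a m = P / Q"
    by (simp add: closed_form_def P_def Q_def)
  ultimately show ?thesis
    by (metis mult_fraction_cancel)
qed

lemma sum_summand_eq_closed_form:
  assumes "k \<ge> 1"
  shows "(\<Sum>n\<le>m. summand k a m n) = closed_form k a m"
proof (induction m)
  case 0
  then show ?case by (simp add: closed_form_def)
next
  case (Suc m)
  have "(of_nat (2*m+k) + 2) * (of_nat (2*m+k) + 1) \<noteq> (0 :: complex)"
    by (simp add: complex_eq_iff)
  moreover have "(of_nat (2*m+k) + 2) * (of_nat (2*m+k) + 1) * (\<Sum>n\<le>Suc m. summand k a (Suc m) n)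
      = (of_nat (2*m+k) + 2) * (of_nat (2*m+k) + 1) * closed_form k a (Suc m)"
    unfolding sum_summand_recurrence[OF assms] closed_form_recurrence Suc.IH ..
  ultimately show ?case
    by simp
qed

theorem mainTheorem5:
  fixes m k :: nat and \<alpha> :: complex
  assumes "m \<ge> 1" and "k \<ge> 1"
    and "\<forall>j::nat. \<alpha> \<noteq> - of_nat j"
    and "\<forall>j::nat. 1 - \<alpha> \<noteq> - of_nat j"
  shows "hyp3F2_trunc (- of_nat m) \<alpha> (1 - \<alpha>) (- of_nat (2*m + k)) (1 + of_nat k) 1 m =
    pochhammer ((2 - \<alpha> + of_nat k) / 2) m * pochhammer ((1 + \<alpha> + of_nat k) / 2) m
    / (pochhammer ((2 + of_nat k) / 2) m * pochhammer ((1 + of_nat k) / 2) m)"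
proof -
  have "hyp3F2_trunc (- of_nat m) \<alpha> (1 - \<alpha>) (- of_nat (2*m + k)) (1 + of_nat k) 1 m
      = (\<Sum>n\<le>m. summand k \<alpha> m n)"
    by (rule hyp3F2_trunc_eq_sum_summand)
  also have "\<dots> = closed_form k \<alpha> m"
    using assms(2) by (rule sum_summand_eq_closed_form)
  finally show ?thesis
    unfolding closed_form_def .
qed

end
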